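(* Let $N_f\ge 2$ be an integer, let $\beta>0$, $\lambda>0$, $r_c>0$, and let $p_r(i)=\frac{i^{-\beta}}{\sum_{k=1}^{N_f}k^{-\beta}}$ for $i=1,\dots,N_f$. Consider the optimization problem $$\max_{p_c(1),\dots,p_c(N_f)}\ \sum_{i=1}^{N_f}p_r(i)\left(1-e^{-\lambda p_c(i)\pi r_c^2}\right)\quad\text{s.t. } \sum_{i=1}^{N_f}p_c(i)=1,\ p_c(i)\ge 0,\ i=1,\dots,N_f.$$ If $\frac{N_f^{N_f}}{N_f!}<e^{\frac{\lambda\pi r_c^2}{\beta}}$, then the optimal solution is $$p_c^*(i)=\frac{1}{N_f}\left(1+\frac{\beta}{\lambda\pi r_c^2}\sum_{j=1}^{N_f}\ln\Big(\frac{j}{i}\Big)\right),\quad i=1,\dots,N_f.$$ Otherwise, the optimal solution is $$p_c^*(i)=\begin{cases}\frac{1}{i^*}\left(1+\frac{\beta}{\lambda\pi r_c^2}\sum_{j=1}^{i^*}\ln\Big(\frac{j}{i}\Big)\right), & i\le i^*,\\ 0, & i^*<i\le N_f,\end{cases}$$ for an integer $i^*\in\{1,\dots,N_f\}$ satisfying $\frac{\lambda\pi r_c^2}{\beta}-1\le i^*\le \frac{\lambda\pi r_c^2}{\beta}+\ln\big(\sqrt{2\pi N_f}\big)+1$.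
   Context: $p_r$ is the Zipf popularity distribution over a catalog of $N_f$ files; $p_c(i)$ is the probability that a user caches file $i$; the objective is the probability (offloading opportunity) that a file requested by a user is cached by some user within distance $r_c$ when users form a Poisson point process of density $\lambda$ in the plane. *)

theory Defs
  imports Complex_Main
begin

definition zipf_pr :: "nat \<Rightarrow> real \<Rightarrow> nat \<Rightarrow> real" where
  "zipf_pr Nf beta i = real i powr (-beta) / (\<Sum>k=1..Nf. real k powr (-beta))"

definition offload_obj :: "nat \<Rightarrow> real \<Rightarrow> real \<Rightarrow> real \<Rightarrow> (nat \<Rightarrow> real) \<Rightarrow> real" where
  "offload_obj Nf beta lam rc pc =
     (\<Sum>i=1..Nf. zipf_pr Nf beta i * (1 - exp (- lam * pc i * pi * rc^2)))"

definition cache_feasible :: "nat \<Rightarrow> (nat \<Rightarrow> real) \<Rightarrow> bool" where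
  "cache_feasible Nf pc \<longleftrightarrow> (\<Sum>i=1..Nf. pc i) = 1 \<and> (\<forall>i\<in>{1..Nf}. pc i \<ge> 0)"

definition cache_optimal :: "nat \<Rightarrow> real \<Rightarrow> real \<Rightarrow> real \<Rightarrow> (nat \<Rightarrow> real) \<Rightarrow> bool" where
  "cache_optimal Nf beta lam rc pc \<longleftrightarrow>
     cache_feasible Nf pc \<and>
     (\<forall>q. cache_feasible Nf q \<longrightarrow> offload_obj Nf beta lam rc q \<le> offload_obj Nf beta lam rc pc)"

end

theory Submission
  imports Defs
begin

text \<open>
  Write \<open>c = \<lambda> \<pi> r\<^sub>c\<^sup>2\<close> and \<open>F m = ln (m^m / m!) = (\<Sum>j\<le>m. ln (m / j))\<close>. The objective is
  concave and separable, so a feasible point is optimal once it satisfies the KKT conditions: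
  the marginal gains \<open>p\<^sub>r i * c * exp (- c * p\<^sub>c i)\<close> share a common value on the support and do
  not exceed it elsewhere. Equalising them over a support \<open>{1..m}\<close> gives the stated formula,
  which is nonnegative exactly when \<open>F m \<le> c / \<beta>\<close>, and the marginal gain of a file
  \<open>i > m\<close> stays below the common value exactly when \<open>c / \<beta> \<le> m ln i - ln m!\<close>, which follows
  from \<open>c / \<beta> \<le> F (m + 1)\<close>. So the support size is the largest \<open>m \<le> N\<^sub>f\<close> with
  \<open>F m \<le> c / \<beta>\<close>; it is \<open>N\<^sub>f\<close> precisely when \<open>N\<^sub>f^N\<^sub>f / N\<^sub>f! < exp (c / \<beta>)\<close>, and the
  elementary Stirling bounds \<open>m - 1 - ln m / 2 \<le> F m \<le> m\<close> locate it.
\<close>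

lemma ln_add_one_ge:
  fixes x :: real
  assumes "x \<ge> 0"
  shows "2 * x / (2 + x) \<le> ln (1 + x)"
proof -
  let ?h = "\<lambda>t::real. ln (1 + t) - 2 * t / (2 + t)"
  have "?h 0 \<le> ?h x"
  proof (rule DERIV_nonneg_imp_nondecreasing[OF assms])
    fix t :: real assume t: "0 \<le> t" "t \<le> x"
    have d: "(?h has_real_derivative (1 / (1 + t) - (2 * (2 + t) - 2 * t) / (2 + t)^2)) (at t)"
      using t by (auto intro!: derivative_eq_intros simp: power2_eq_square)
    have "1 / (1 + t) - (2 * (2 + t) - 2 * t) / (2 + t)^2 = t^2 / ((1 + t) * (2 + t)^2)"
      using t by (simp add: divide_simps) (simp add: algebra_simps power2_eq_square)
    moreover have "t^2 / ((1 + t) * (2 + t)^2) \<ge> 0" using t by simp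
    ultimately show "\<exists>y. (?h has_real_derivative y) (at t) \<and> 0 \<le> y" using d by auto
  qed
  thus ?thesis by simp
qed

lemma ln_Suc_minus_ln: "k > 0 \<Longrightarrow> ln (real (Suc k)) - ln (real k) = ln (1 + 1 / real k)"
proof -
  assume "k > 0"
  then have "1 + 1 / real k = (real k + 1) / real k" by (simp add: field_simps)
  with \<open>k > 0\<close> show ?thesis by (simp add: ln_div)
qed

lemma ln_fact_eq_sum_ln: "ln (fact n :: real) = (\<Sum>j=1..n. ln (real j))"
  unfolding fact_prod of_nat_prod by (rule ln_prod) auto

lemma sum_ln_div_eq:
  "i \<ge> 1 \<Longrightarrow> (\<Sum>j=1..m. ln (real j / real i)) = ln (fact m) - real m * ln (real i)"
  by (simp add: ln_div sum_subtractf ln_fact_eq_sum_ln)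

text \<open>\<open>log_ratio_sum k = (\<Sum>j=1..k. ln (k / j))\<close>, the function \<open>F\<close> of the proof idea.\<close>
definition log_ratio_sum :: "nat \<Rightarrow> real" where
  "log_ratio_sum k = real k * ln (real k) - ln (fact k)"

lemma log_ratio_sum_Suc: "log_ratio_sum (Suc k) = real k * ln (real (Suc k)) - ln (fact k)"
proof -
  have "ln (fact (Suc k) :: real) = ln (real k + 1) + ln (fact k)"
    by (simp add: ln_mult del: of_nat_Suc)
  then show ?thesis by (simp add: log_ratio_sum_def algebra_simps)
qed

lemma log_ratio_sum_Suc_increment:
  "k > 0 \<Longrightarrow> log_ratio_sum (Suc k) = log_ratio_sum k + real k * ln (1 + 1 / real k)"
  by (subst log_ratio_sum_Suc) (simp add: log_ratio_sum_def ln_Suc_minus_ln[symmetric] algebra_simps)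

lemma ln_pow_div_fact: "ln (real k ^ k / fact k) = log_ratio_sum k"
  by (cases "k = 0") (simp_all add: log_ratio_sum_def ln_div ln_realpow)

lemma log_ratio_sum_one: "log_ratio_sum 1 = 0"
  by (simp add: log_ratio_sum_def)

lemma log_ratio_sum_le: "k \<ge> 1 \<Longrightarrow> log_ratio_sum k \<le> real k"
proof (induction k rule: dec_induct)
  case base then show ?case using log_ratio_sum_one by simp
next
  case (step k)
  have k: "real k > 0" using step by simp
  have "ln (1 + 1 / real k) \<le> 1 / real k" by (rule ln_add_one_self_le_self) simp
  then have "real k * ln (1 + 1 / real k) \<le> 1" using k by (simp add: field_simps)
  then show ?case using step log_ratio_sum_Suc_increment[of k] by simp
qed

lemma log_ratio_sum_ge: "k \<ge> 1 \<Longrightarrow> real k - 1 - ln (real k) / 2 \<le> log_ratio_sum k"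
proof (induction k rule: dec_induct)
  case base then show ?case using log_ratio_sum_one by simp
next
  case (step k)
  have k: "real k > 0" using step by simp
  have "2 * (1 / real k) / (2 + 1 / real k) \<le> ln (1 + 1 / real k)" by (rule ln_add_one_ge) simp
  moreover have "2 * (1 / real k) / (2 + 1 / real k) = 2 / (2 * real k + 1)"
    using k by (simp add: field_simps)
  ultimately have "1 \<le> real k * ln (1 + 1 / real k) + ln (1 + 1 / real k) / 2"
    using k by (simp add: divide_simps algebra_simps)
  then show ?case
    using step.IH log_ratio_sum_Suc_increment[of k] ln_Suc_minus_ln[of k] k by simp
qed

text \<open>The candidate supported on \<open>{1..m}\<close>; it is used with \<open>\<theta> = \<beta> / c\<close>.\<close>
definition truncated_cache :: "real \<Rightarrow> nat \<Rightarrow> nat \<Rightarrow> real" where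
  "truncated_cache \<theta> m i =
     (if i \<le> m then 1 / real m * (1 + \<theta> * (\<Sum>j=1..m. ln (real j / real i))) else 0)"

lemma truncated_cache_eq:
  assumes "1 \<le> i" "i \<le> m"
  shows "truncated_cache \<theta> m i = (1 + \<theta> * (ln (fact m) - real m * ln (real i))) / real m"
  unfolding truncated_cache_def sum_ln_div_eq[OF assms(1)] using assms(2) by simp

lemma truncated_cache_sum:
  assumes "1 \<le> m" "m \<le> N"
  shows "(\<Sum>i=1..N. truncated_cache \<theta> m i) = 1"
proof -
  have "(\<Sum>i=1..N. truncated_cache \<theta> m i) = (\<Sum>i=1..m. truncated_cache \<theta> m i)"
    using assms by (intro sum.mono_neutral_right) (auto simp: truncated_cache_def)
  also have "\<dots> = (\<Sum>i=1..m. (1 + \<theta> * ln (fact m)) / real m - \<theta> * ln (real i))"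
    using assms by (intro sum.cong) (auto simp: truncated_cache_eq field_simps)
  also have "\<dots> = (1 + \<theta> * ln (fact m)) - \<theta> * ln (fact m)"
    using assms by (simp add: sum_subtractf sum_distrib_left[symmetric] ln_fact_eq_sum_ln)
  finally show ?thesis by simp
qed

lemma truncated_cache_nonneg:
  assumes "\<theta> > 0" "1 \<le> i" and "\<theta> * log_ratio_sum m \<le> 1"
  shows "truncated_cache \<theta> m i \<ge> 0"
proof (cases "i \<le> m")
  case True
  then have "\<theta> * (real m * ln (real i) - ln (fact m)) \<le> \<theta> * log_ratio_sum m"
    using assms(1,2) unfolding log_ratio_sum_def by (intro mult_left_mono) auto
  with assms(3) show ?thesis using True assms(2) by (simp add: truncated_cache_eq algebra_simps)
qed (simp add: truncated_cache_def)

lemma truncated_cache_feasible: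
  assumes "\<theta> > 0" "1 \<le> m" "m \<le> N" "\<theta> * log_ratio_sum m \<le> 1"
  shows "cache_feasible N (truncated_cache \<theta> m)"
  using truncated_cache_sum[OF assms(2,3)] truncated_cache_nonneg[OF assms(1) _ assms(4)]
  unfolding cache_feasible_def by auto

lemma truncated_cache_level:
  assumes "c > 0" "1 \<le> i" "i \<le> m"
  shows "beta * ln (real i) + c * truncated_cache (beta / c) m i = (c + beta * ln (fact m)) / real m"
  using assms by (simp add: truncated_cache_eq field_simps)

lemma one_minus_exp_le_tangent:
  fixes c x y :: real
  shows "1 - exp (- c * x) \<le> 1 - exp (- c * y) + c * exp (- c * y) * (x - y)"
proof -
  have "exp (- c * x) = exp (- c * y) * exp (- c * (x - y))"
    by (simp add: exp_add[symmetric] algebra_simps)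
  moreover have "1 + (- c * (x - y)) \<le> exp (- c * (x - y))" by (rule exp_ge_add_one_self)
  ultimately have "exp (- c * y) * (1 - c * (x - y)) \<le> exp (- c * x)"
    by (simp add: mult_left_mono)
  thus ?thesis by (simp add: algebra_simps)
qed

lemma kkt_sufficient_one_minus_exp:
  fixes p qs q :: "nat \<Rightarrow> real" and c \<nu> :: real
  assumes qs: "cache_feasible N qs" and q: "cache_feasible N q"
    and p_nonneg: "\<And>i. i \<in> {1..N} \<Longrightarrow> p i \<ge> 0"
    and marginal_le: "\<And>i. i \<in> {1..N} \<Longrightarrow> p i * c * exp (- c * qs i) \<le> \<nu>"
    and marginal_eq: "\<And>i. i \<in> {1..N} \<Longrightarrow> qs i \<noteq> 0 \<Longrightarrow> p i * c * exp (- c * qs i) = \<nu>"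
  shows "(\<Sum>i=1..N. p i * (1 - exp (- c * q i))) \<le> (\<Sum>i=1..N. p i * (1 - exp (- c * qs i)))"
proof -
  let ?w = "\<lambda>i. p i * c * exp (- c * qs i)"
  have "(\<Sum>i=1..N. p i * (1 - exp (- c * q i))) \<le>
        (\<Sum>i=1..N. p i * (1 - exp (- c * qs i)) + ?w i * (q i - qs i))"
  proof (rule sum_mono)
    fix i assume "i \<in> {1..N}"
    then have "p i * (1 - exp (- c * q i)) \<le>
        p i * (1 - exp (- c * qs i) + c * exp (- c * qs i) * (q i - qs i))"
      using p_nonneg one_minus_exp_le_tangent by (intro mult_left_mono) auto
    thus "p i * (1 - exp (- c * q i)) \<le> p i * (1 - exp (- c * qs i)) + ?w i * (q i - qs i)"
      by (simp add: algebra_simps)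
  qed
  also have "\<dots> = (\<Sum>i=1..N. p i * (1 - exp (- c * qs i))) + (\<Sum>i=1..N. ?w i * (q i - qs i))"
    by (simp add: sum.distrib)
  also have "(\<Sum>i=1..N. ?w i * (q i - qs i)) \<le> (\<Sum>i=1..N. \<nu> * (q i - qs i))"
  proof (rule sum_mono)
    fix i assume i: "i \<in> {1..N}"
    show "?w i * (q i - qs i) \<le> \<nu> * (q i - qs i)"
    proof (cases "qs i = 0")
      case True
      have "q i \<ge> 0" using q i by (auto simp: cache_feasible_def)
      then show ?thesis using marginal_le[OF i] True by (simp add: mult_right_mono)
    qed (use marginal_eq i in auto)
  qed
  also have "(\<Sum>i=1..N. \<nu> * (q i - qs i)) = 0"
    using qs q by (simp add: sum_distrib_left[symmetric] sum_subtractf cache_feasible_def)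
  finally show ?thesis by simp
qed

lemma zipf_pr_nonneg: "zipf_pr N beta i \<ge> 0"
  unfolding zipf_pr_def by (intro divide_nonneg_nonneg sum_nonneg) auto

lemma zipf_marginal_gain:
  assumes "i \<ge> 1"
  shows "zipf_pr N beta i * c * exp (- c * x) =
    c / (\<Sum>k=1..N. real k powr (- beta)) * exp (- (beta * ln (real i) + c * x))"
  using assms by (simp add: zipf_pr_def powr_def exp_add[symmetric] algebra_simps)

lemma cache_optimal_cong:
  assumes "\<And>i. i \<in> {1..N} \<Longrightarrow> f i = g i"
  shows "cache_optimal N beta lam rc f = cache_optimal N beta lam rc g"
proof -
  have "sum f {1..N} = sum g {1..N}" using assms by (intro sum.cong) auto
  then have "cache_feasible N f = cache_feasible N g"
    unfolding cache_feasible_def using assms by auto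
  moreover have "offload_obj N beta lam rc f = offload_obj N beta lam rc g"
    unfolding offload_obj_def using assms by (intro sum.cong) auto
  ultimately show ?thesis unfolding cache_optimal_def by simp
qed

lemma truncated_cache_optimal:
  fixes N m :: nat and beta lam rc :: real
  defines "c \<equiv> lam * pi * rc^2"
  assumes m: "1 \<le> m" "m \<le> N" and pos: "beta > 0" "lam > 0" "rc > 0"
    and nonneg_at_m: "log_ratio_sum m \<le> c / beta"
    and no_gain_beyond_m: "m < N \<Longrightarrow> c / beta \<le> log_ratio_sum (Suc m)"
  shows "cache_optimal N beta lam rc (truncated_cache (beta / c) m)"
proof -
  let ?qs = "truncated_cache (beta / c) m"
  define S where "S = (\<Sum>k=1..N. real k powr (- beta))"
  define A where "A = (c + beta * ln (fact m)) / real m"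
  define \<nu> where "\<nu> = c / S * exp (- A)"
  have c: "c > 0" using pos by (simp add: c_def)
  have "S > 0" unfolding S_def using m by (intro sum_pos) auto
  have feasible: "cache_feasible N ?qs"
    using m pos c nonneg_at_m by (intro truncated_cache_feasible) (auto simp: field_simps)
  have marginal_eq: "zipf_pr N beta i * c * exp (- c * ?qs i) = \<nu>" if "1 \<le> i" "i \<le> m" for i
    unfolding zipf_marginal_gain[OF that(1)] S_def[symmetric] \<nu>_def A_def
    by (simp add: truncated_cache_level[where beta = beta, OF c that])
  have marginal_eq_on_support: "zipf_pr N beta i * c * exp (- c * ?qs i) = \<nu>"
    if "i \<in> {1..N}" "?qs i \<noteq> 0" for i
  proof (rule marginal_eq)
    show "i \<le> m" using that(2) by (simp add: truncated_cache_def split: if_splits)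
  qed (use that(1) in simp)
  have marginal_le: "zipf_pr N beta i * c * exp (- c * ?qs i) \<le> \<nu>" if "i \<in> {1..N}" for i
  proof (cases "i \<le> m")
    case False
    then have "c / beta \<le> real m * ln (real (Suc m)) - ln (fact m)"
      using no_gain_beyond_m that log_ratio_sum_Suc by auto
    also have "\<dots> \<le> real m * ln (real i) - ln (fact m)"
      using False by (simp add: mult_left_mono)
    finally have "exp (- (beta * ln (real i) + c * 0)) \<le> exp (- A)"
      using pos m by (simp add: A_def field_simps)
    then have "c / S * exp (- (beta * ln (real i) + c * 0)) \<le> \<nu>"
      using \<open>S > 0\<close> c by (auto simp: \<nu>_def intro!: divide_right_mono mult_left_mono)
    moreover have "?qs i = 0" using False by (simp add: truncated_cache_def)
    moreover have "i \<ge> 1" using that by simp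
    ultimately show ?thesis unfolding zipf_marginal_gain[OF \<open>i \<ge> 1\<close>] S_def[symmetric] by simp
  qed (use marginal_eq that in auto)
  have obj: "offload_obj N beta lam rc q = (\<Sum>i=1..N. zipf_pr N beta i * (1 - exp (- c * q i)))"
    for q unfolding offload_obj_def c_def by (intro sum.cong) (auto simp: algebra_simps)
  have "offload_obj N beta lam rc q \<le> offload_obj N beta lam rc ?qs" if "cache_feasible N q" for q
    unfolding obj by (rule kkt_sufficient_one_minus_exp[OF feasible that zipf_pr_nonneg
          marginal_le marginal_eq_on_support])
  with feasible show ?thesis unfolding cache_optimal_def by blast
qed

lemma support_size_exists:
  assumes "N \<ge> 1" "x \<ge> 0"
  obtains m where "m \<in> {1..N}" "log_ratio_sum m \<le> x" "m < N \<Longrightarrow> x < log_ratio_sum (Suc m)"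
proof -
  define M where "M = {k \<in> {1..N}. log_ratio_sum k \<le> x}"
  have "finite M" "1 \<in> M" using assms log_ratio_sum_one by (auto simp: M_def)
  then have "Max M \<in> M" by (intro Max_in) auto
  moreover have "Suc (Max M) \<notin> M" using Max_ge[OF \<open>finite M\<close>, of "Suc (Max M)"] by auto
  ultimately show ?thesis by (intro that[of "Max M"]) (auto simp: M_def)
qed

lemma support_size_bounds:
  assumes "m \<in> {1..N}" "log_ratio_sum m \<le> x" "m < N \<Longrightarrow> x < log_ratio_sum (Suc m)"
    and "x \<le> log_ratio_sum N"
  shows "x - 1 \<le> real m" "real m \<le> x + 1 + ln (real m) / 2"
proof -
  show "x - 1 \<le> real m"
  proof (cases "m < N")
    case True
    then show ?thesis using assms(3) log_ratio_sum_le[of "Suc m"] by simp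
  next
    case False
    then have "m = N" using assms(1) by simp
    then show ?thesis using assms(1,4) log_ratio_sum_le[of N] by simp
  qed
  show "real m \<le> x + 1 + ln (real m) / 2"
    using assms(1,2) log_ratio_sum_ge[of m] by simp
qed

lemma pow_div_fact_less_exp_iff: "real N ^ N / fact N < exp y \<longleftrightarrow> log_ratio_sum N < y"
proof -
  have "real N ^ N / fact N = exp (log_ratio_sum N)"
    using exp_ln[of "real N ^ N / fact N"] by (cases "N = 0") (simp_all add: ln_pow_div_fact log_ratio_sum_def)
  then show ?thesis by simp
qed

lemma full_support_optimal:
  fixes N :: nat and beta lam rc :: real
  defines "c \<equiv> lam * pi * rc^2"
  assumes "N \<ge> 1" "beta > 0" "lam > 0" "rc > 0" and "log_ratio_sum N \<le> c / beta"
  shows "cache_optimal N beta lam rc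
    (\<lambda>i. 1 / real N * (1 + beta / c * (\<Sum>j=1..N. ln (real j / real i))))"
proof -
  have "cache_optimal N beta lam rc (truncated_cache (beta / c) N)"
    unfolding c_def using assms(2-) by (intro truncated_cache_optimal) (auto simp: c_def)
  then show ?thesis by (subst cache_optimal_cong) (auto simp: truncated_cache_def)
qed

lemma partial_support_optimal:
  fixes N :: nat and beta lam rc :: real
  defines "c \<equiv> lam * pi * rc^2"
  assumes N: "N \<ge> 1" and pos: "beta > 0" "lam > 0" "rc > 0" and "c / beta \<le> log_ratio_sum N"
  shows "\<exists>m\<in>{1..N}. c / beta - 1 \<le> real m \<and> real m \<le> c / beta + ln (sqrt (2 * pi * real N)) + 1 \<and>
    cache_optimal N beta lam rc (truncated_cache (beta / c) m)"
proof -
  have "c / beta \<ge> 0" using pos by (simp add: c_def)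
  then obtain m where m: "m \<in> {1..N}" "log_ratio_sum m \<le> c / beta"
    "m < N \<Longrightarrow> c / beta < log_ratio_sum (Suc m)"
    using support_size_exists[OF N] by blast
  note bounds = support_size_bounds[OF m assms(6)]
  have "real m \<le> real N" using m(1) by simp
  also have "\<dots> \<le> 2 * pi * real N" using pi_ge_two by (simp add: mult_le_cancel_right1)
  finally have "ln (real m) / 2 \<le> ln (sqrt (2 * pi * real N))"
    using m(1) by (simp add: ln_sqrt)
  moreover have "cache_optimal N beta lam rc (truncated_cache (beta / c) m)"
    unfolding c_def using m pos by (intro truncated_cache_optimal) (auto simp: c_def less_imp_le)
  ultimately show ?thesis using bounds m(1) by fastforce
qed

theorem proposition1:
  fixes Nf :: nat and beta lam rc :: real
  assumes "Nf \<ge> 2" and "beta > 0" and "lam > 0" and "rc > 0"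
  shows "(real Nf ^ Nf / fact Nf < exp (lam * pi * rc^2 / beta) \<longrightarrow>
           cache_optimal Nf beta lam rc
             (\<lambda>i. 1 / real Nf * (1 + beta / (lam * pi * rc^2) *
                     (\<Sum>j=1..Nf. ln (real j / real i)))))
       \<and> (\<not> (real Nf ^ Nf / fact Nf < exp (lam * pi * rc^2 / beta)) \<longrightarrow>
           (\<exists>istar\<in>{1..Nf}.
              lam * pi * rc^2 / beta - 1 \<le> real istar \<and>
              real istar \<le> lam * pi * rc^2 / beta + ln (sqrt (2 * pi * real Nf)) + 1 \<and>
              cache_optimal Nf beta lam rc
                (\<lambda>i. if i \<le> istar
                      then 1 / real istar * (1 + beta / (lam * pi * rc^2) *
                             (\<Sum>j=1..istar. ln (real j / real i)))
                      else 0)))"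
proof -
  have N: "Nf \<ge> 1" using assms(1) by simp
  show ?thesis
    using full_support_optimal[OF N assms(2-4)] partial_support_optimal[OF N assms(2-4)]
      pow_div_fact_less_exp_iff[of Nf]
    unfolding truncated_cache_def[abs_def] by (meson less_imp_le not_less)
qed

end
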